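(* Let $H$ be a separable Hilbert space and $A:H\to H$ a surjective bounded linear operator which is real diagonalisable as $A=V^{-1}M_fV$, where $(\Omega,\mathcal{A},\mu)$ is a measure space, $f\in L^\infty_\mu(\Omega)$ is real-valued, $M_f:L^2_\mu(\Omega)\to L^2_\mu(\Omega)$ is multiplication by $f$, and $V:H\to L^2_\mu(\Omega)$ is an invertible bounded linear operator. Define $\mathcal{F}(x):=-\frac12\,(Vx,M_fVx)_{L^2_\mu(\Omega)}$ and $K:=V^{-1}V^{-\mathsf{T}}$, and let $d$ be the associated metric $$d(x_1,x_2)^2:=\inf_{\gamma\in\Gamma(x_1,x_2)}\int_0^1\sup_{\xi\in H}\big\langle \xi,2\dot\gamma(s)-K\xi\big\rangle_H\,\mathrm{d}s .$$ Then $\mathcal{F}$ is geodesically $\lambda$-convex with respect to $d$, with $$\lambda:=-\operatorname*{ess\,sup}_{\omega\in\Omega}f(\omega)\;c_V,\qquad c_V:=\begin{cases}\|V^{-1}\|^2\,\|V\|^2,&\text{if }\operatorname*{ess\,sup}_{\Omega}f\ge0,\\ \|V^{-1}\|^{-2}\,\|V\|^{-2},&\text{otherwise},\end{cases}$$ where $\|V\|$ and $\|V^{-1}\|$ are the operator norms in $L(H,L^2_\mu(\Omega))$ and $L(L^2_\mu(\Omega),H)$. If in addition the measure space $(\Omega,\mathcal{A},\mu)$ is finite and the spectrum satisfies $\sigma(A)\subset(-\infty,0]$, then $f\le0$ $\mu$-a.e., and hence $\lambda\ge0$.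
   Context: $V^{\mathsf{T}}:L^2_\mu(\Omega)\to H$ denotes the Hilbert-space adjoint of $V$ and $V^{-\mathsf{T}}$ the adjoint of $V^{-1}$ (equivalently the inverse of $V^{\mathsf{T}}$). $\Gamma(x_1,x_2)$ is the set of curves $\gamma\in C^1([0,1],H)$ with $\gamma(0)=x_1$, $\gamma(1)=x_2$. Geodesic $\lambda$-convexity of $\mathcal{F}$ w.r.t. $d$ means: for every constant-speed (arc-length parametrised) geodesic $\gamma:[0,1]\to H$ of $(H,d)$ and every $\theta\in[0,1]$, $\mathcal{F}(\gamma(\theta))\le(1-\theta)\mathcal{F}(\gamma(0))+\theta\mathcal{F}(\gamma(1))-\lambda\frac{\theta(1-\theta)}{2}d(\gamma(0),\gamma(1))^2$. *)

theory Defs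
  imports "HOL-Analysis.Analysis" "HOL-Probability.Probability"
begin

text \<open>L^2_mu(Omega) is modelled by square-integrable measurable real functions,
  all statements about L^2 elements being understood up to mu-a.e. equality.\<close>

definition L2 :: "'w measure \<Rightarrow> ('w \<Rightarrow> real) set" where
  "L2 M = {g. g \<in> borel_measurable M \<and> integrable M (\<lambda>w. (g w)^2)}"

definition L2inner :: "'w measure \<Rightarrow> ('w \<Rightarrow> real) \<Rightarrow> ('w \<Rightarrow> real) \<Rightarrow> real" where
  "L2inner M g h = (LINT w|M. g w * h w)"

definition L2norm :: "'w measure \<Rightarrow> ('w \<Rightarrow> real) \<Rightarrow> real" where
  "L2norm M g = sqrt (L2inner M g g)"

definition mult_op :: "('w \<Rightarrow> real) \<Rightarrow> ('w \<Rightarrow> real) \<Rightarrow> ('w \<Rightarrow> real)" where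
  "mult_op f g = (\<lambda>w. f w * g w)"

definition bounded_linear_to_L2 :: "'w measure \<Rightarrow> ('h::real_normed_vector \<Rightarrow> 'w \<Rightarrow> real) \<Rightarrow> bool" where
  "bounded_linear_to_L2 M V \<longleftrightarrow>
     (\<forall>x. V x \<in> L2 M) \<and>
     (\<forall>x y. V (x + y) = (\<lambda>w. V x w + V y w)) \<and>
     (\<forall>c x. V (c *\<^sub>R x) = (\<lambda>w. c * V x w)) \<and>
     (\<exists>C. \<forall>x. L2norm M (V x) \<le> C * norm x)"

definition is_bounded_inverse :: "'w measure \<Rightarrow> ('h::real_normed_vector \<Rightarrow> 'w \<Rightarrow> real)
     \<Rightarrow> (('w \<Rightarrow> real) \<Rightarrow> 'h) \<Rightarrow> bool" where
  "is_bounded_inverse M V Vinv \<longleftrightarrow>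
     (\<forall>x. Vinv (V x) = x) \<and>
     (\<forall>g\<in>L2 M. AE w in M. V (Vinv g) w = g w) \<and>
     (\<forall>g\<in>L2 M. \<forall>h\<in>L2 M. (AE w in M. g w = h w) \<longrightarrow> Vinv g = Vinv h) \<and>
     (\<forall>g\<in>L2 M. \<forall>h\<in>L2 M. Vinv (\<lambda>w. g w + h w) = Vinv g + Vinv h) \<and>
     (\<forall>g\<in>L2 M. \<forall>c. Vinv (\<lambda>w. c * g w) = c *\<^sub>R Vinv g) \<and>
     (\<exists>C. \<forall>g\<in>L2 M. norm (Vinv g) \<le> C * L2norm M g)"

text \<open>W is the Hilbert-space adjoint of Vinv, i.e. W = V^{-T} : H -> L^2.\<close>
definition is_adjoint_of_inv :: "'w measure \<Rightarrow> (('w \<Rightarrow> real) \<Rightarrow> 'h::real_inner)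
     \<Rightarrow> ('h \<Rightarrow> 'w \<Rightarrow> real) \<Rightarrow> bool" where
  "is_adjoint_of_inv M Vinv W \<longleftrightarrow>
     (\<forall>\<xi>. W \<xi> \<in> L2 M \<and> (\<forall>g\<in>L2 M. L2inner M (W \<xi>) g = inner \<xi> (Vinv g)))"

definition opnorm_V :: "'w measure \<Rightarrow> ('h::real_normed_vector \<Rightarrow> 'w \<Rightarrow> real) \<Rightarrow> real" where
  "opnorm_V M V = (SUP x. L2norm M (V x) / norm x)"

definition opnorm_Vinv :: "'w measure \<Rightarrow> (('w \<Rightarrow> real) \<Rightarrow> 'h::real_normed_vector) \<Rightarrow> real" where
  "opnorm_Vinv M Vinv = (SUP g\<in>L2 M. norm (Vinv g) / L2norm M g)"

definition curves :: "'h::real_normed_vector \<Rightarrow> 'h \<Rightarrow> (real \<Rightarrow> 'h) set" where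
  "curves x1 x2 = {\<gamma>. \<gamma> 0 = x1 \<and> \<gamma> 1 = x2 \<and>
      (\<exists>D. continuous_on {0..1} D \<and>
           (\<forall>s\<in>{0..1}. (\<gamma> has_vector_derivative D s) (at s within {0..1})))}"

definition Kdist :: "('h::real_inner \<Rightarrow> 'h) \<Rightarrow> 'h \<Rightarrow> 'h \<Rightarrow> real" where
  "Kdist K x1 x2 = sqrt (Inf ((\<lambda>\<gamma>. integral {0..1}
      (\<lambda>s. Sup (range (\<lambda>\<xi>. inner \<xi> (2 *\<^sub>R vector_derivative \<gamma> (at s within {0..1}) - K \<xi>)))))
      ` curves x1 x2))"

definition const_speed_geodesic :: "('h \<Rightarrow> 'h \<Rightarrow> real) \<Rightarrow> (real \<Rightarrow> 'h) \<Rightarrow> bool" where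
  "const_speed_geodesic d \<gamma> \<longleftrightarrow>
     (\<forall>s\<in>{0..1}. \<forall>t\<in>{0..1}. d (\<gamma> s) (\<gamma> t) = \<bar>t - s\<bar> * d (\<gamma> 0) (\<gamma> 1))"

definition geodesically_convex :: "('h \<Rightarrow> 'h \<Rightarrow> real) \<Rightarrow> ('h \<Rightarrow> real) \<Rightarrow> real \<Rightarrow> bool" where
  "geodesically_convex d F lam \<longleftrightarrow>
     (\<forall>\<gamma> \<theta>. const_speed_geodesic d \<gamma> \<longrightarrow> \<theta> \<in> {0..1} \<longrightarrow>
        F (\<gamma> \<theta>) \<le> (1 - \<theta>) * F (\<gamma> 0) + \<theta> * F (\<gamma> 1)
                   - lam * (\<theta> * (1 - \<theta>) / 2) * (d (\<gamma> 0) (\<gamma> 1))^2)"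

definition op_spectrum :: "('h::real_normed_vector \<Rightarrow> 'h) \<Rightarrow> real set" where
  "op_spectrum A = {l. \<not> (\<exists>B. bounded_linear B \<and> (\<forall>x. B (A x - l *\<^sub>R x) = x)
                                    \<and> (\<forall>y. A (B y) - l *\<^sub>R B y = y))}"

definition ess_sup :: "'w measure \<Rightarrow> ('w \<Rightarrow> real) \<Rightarrow> real" where
  "ess_sup M f = real_of_ereal (esssup M (\<lambda>w. ereal (f w)))"

end

theory Submission
  imports Defs
begin

(*
  Since V is injective, (x, y) |-> (V x, V y) is an inner product on H. For a velocity v the
  supremum in the definition of d is a concave maximisation in xi, attained at the Riesz
  representative xi = V^T V v of (V v, V _), with value |V v|^2. Testing an arbitrary curve
  against the maximiser for its chord shows that segments minimise the energy, so
  d(x1, x2) = |V (x2 - x1)| and the constant-speed geodesics of d are the segments. Along a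
  segment F exceeds linear interpolation by (1/2) theta (1 - theta) (V h, f V h), where
  h = x1 - x2, and (V h, f V h) <= ess sup f |V h|^2 <= ess sup f c_V |V h|^2 because
  ||V^-1|| ||V|| >= 1.

  If s = ess sup f were positive on a finite measure space, V^-1 applied to the indicators of
  the sets {|f - s| < delta} would give approximate eigenvectors of A = V^-1 M_f V for s, so s
  would lie in the spectrum of A.
*)

section \<open>Square-integrable functions\<close>

lemma L2_mult_integrable:
  assumes "g \<in> L2 M" "h \<in> L2 M"
  shows "integrable M (\<lambda>w. g w * h w)"
proof (rule Bochner_Integration.integrable_bound)
  show "integrable M (\<lambda>w. (g w)\<^sup>2 + (h w)\<^sup>2)" using assms by (simp add: L2_def)
  show "(\<lambda>w. g w * h w) \<in> borel_measurable M"
    using assms by (simp add: L2_def borel_measurable_times)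
  have "\<bar>x * y\<bar> \<le> x\<^sup>2 + y\<^sup>2" for x y :: real
  proof -
    have "2 * \<bar>x * y\<bar> \<le> x\<^sup>2 + y\<^sup>2"
      using sum_squares_bound[of "\<bar>x\<bar>" "\<bar>y\<bar>"] by (simp add: abs_mult mult.assoc)
    then show ?thesis using abs_ge_zero[of "x * y"] by linarith
  qed
  then show "AE w in M. norm (g w * h w) \<le> norm ((g w)\<^sup>2 + (h w)\<^sup>2)" by simp
qed

lemma L2_zero [simp]: "(\<lambda>w. 0) \<in> L2 M"
  by (simp add: L2_def)

lemma L2_scale: "g \<in> L2 M \<Longrightarrow> (\<lambda>w. c * g w) \<in> L2 M"
  by (auto simp: L2_def power_mult_distrib)

lemma L2_diff:
  assumes "g \<in> L2 M" "h \<in> L2 M"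
  shows "(\<lambda>w. g w - h w) \<in> L2 M"
proof -
  have "(\<lambda>w. (g w - h w)\<^sup>2) = (\<lambda>w. g w * g w - 2 * (g w * h w) + h w * h w)"
    by (auto simp: power2_eq_square algebra_simps)
  then show ?thesis
    using assms L2_mult_integrable[OF assms] L2_mult_integrable[of g M g] L2_mult_integrable[of h M h]
    by (auto simp: L2_def)
qed

lemma L2_bounded_mult:
  assumes f: "f \<in> borel_measurable M" "AE w in M. \<bar>f w\<bar> \<le> C" and g: "g \<in> L2 M"
  shows "(\<lambda>w. f w * g w) \<in> L2 M"
proof -
  have "integrable M (\<lambda>w. (f w * g w)\<^sup>2)"
  proof (rule Bochner_Integration.integrable_bound)
    show "integrable M (\<lambda>w. C\<^sup>2 * (g w)\<^sup>2)" using g by (simp add: L2_def)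
    show "(\<lambda>w. (f w * g w)\<^sup>2) \<in> borel_measurable M"
      using f g by (simp add: L2_def borel_measurable_times borel_measurable_power)
    show "AE w in M. norm ((f w * g w)\<^sup>2) \<le> norm (C\<^sup>2 * (g w)\<^sup>2)"
      using f(2) by eventually_elim (simp add: power_mult_distrib mult_mono power2_le_iff_abs_le)
  qed
  then show ?thesis using f g by (simp add: L2_def borel_measurable_times)
qed

lemma L2inner_nonneg: "0 \<le> L2inner M g g"
  unfolding L2inner_def by (rule integral_nonneg_AE) simp

lemma L2norm_nonneg: "0 \<le> L2norm M g"
  by (simp add: L2norm_def L2inner_nonneg)

lemma L2inner_commute: "L2inner M g h = L2inner M h g"
  unfolding L2inner_def by (simp add: mult.commute)

lemma L2inner_cong_AE:
  assumes "g \<in> L2 M" "g' \<in> L2 M" "h \<in> L2 M" "h' \<in> L2 M"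
    and "AE w in M. g w = g' w" "AE w in M. h w = h' w"
  shows "L2inner M g h = L2inner M g' h'"
  unfolding L2inner_def
  by (rule integral_cong_AE) (use assms in \<open>auto simp: L2_def elim: eventually_mono\<close>)

lemma L2inner_self_eq_0_imp_AE:
  assumes "g \<in> L2 M" "L2inner M g g = 0"
  shows "AE w in M. g w = 0"
proof -
  have "AE w in M. g w * g w = 0"
    using assms integral_nonneg_eq_0_iff_AE[of M "\<lambda>w. g w * g w"] L2_mult_integrable[OF assms(1,1)]
    by (simp add: L2inner_def)
  then show ?thesis by simp
qed

lemma L2inner_two_mult_le:
  assumes "g \<in> L2 M" "h \<in> L2 M"
  shows "2 * L2inner M g h - L2inner M g g \<le> L2inner M h h"
proof -
  have "(LINT w|M. 2 * (g w * h w)) \<le> (LINT w|M. g w * g w + h w * h w)"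
  proof (rule integral_mono)
    show "integrable M (\<lambda>w. 2 * (g w * h w))" using L2_mult_integrable[OF assms] by simp
    show "integrable M (\<lambda>w. g w * g w + h w * h w)"
      using L2_mult_integrable[OF assms(1,1)] L2_mult_integrable[OF assms(2,2)] by simp
    show "2 * (g w * h w) \<le> g w * g w + h w * h w" for w
      using sum_squares_bound[of "g w" "h w"] by (simp add: power2_eq_square mult.assoc)
  qed
  then show ?thesis
    using L2_mult_integrable[OF assms(1,1)] L2_mult_integrable[OF assms(2,2)] by (simp add: L2inner_def)
qed

lemma L2_indicator:
  assumes "S \<in> sets M" "emeasure M S < \<infinity>"
  shows "indicator S \<in> L2 M" and "L2inner M (indicator S) (indicator S) = measure M S"
proof -
  have sq: "(indicator S w :: real) * indicator S w = indicator S w" for w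
    by (simp add: indicator_def)
  show "indicator S \<in> L2 M"
    using assms by (simp add: L2_def power2_eq_square sq)
  show "L2inner M (indicator S) (indicator S) = measure M S"
    using assms(1) sets.Int_space_eq2[of S M] by (simp add: L2inner_def sq)
qed

lemma L2inner_indicator_mult_le:
  assumes "S \<in> sets M" "emeasure M S < \<infinity>" "(\<lambda>w. h w * indicator S w) \<in> L2 M"
    and bound: "\<And>w. w \<in> S \<Longrightarrow> \<bar>h w\<bar> \<le> \<delta>"
  shows "L2inner M (\<lambda>w. h w * indicator S w) (\<lambda>w. h w * indicator S w) \<le> \<delta>\<^sup>2 * measure M S"
proof -
  have "(LINT w|M. (h w * indicator S w) * (h w * indicator S w)) \<le> (LINT w|M. \<delta>\<^sup>2 * indicator S w)"
  proof (rule integral_mono)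
    show "integrable M (\<lambda>w. h w * indicator S w * (h w * indicator S w))"
      using L2_mult_integrable[OF assms(3,3)] .
    show "integrable M (\<lambda>w. \<delta>\<^sup>2 * indicator S w :: real)"
      using assms(1,2) by simp
    show "h w * indicator S w * (h w * indicator S w) \<le> \<delta>\<^sup>2 * indicator S w" for w
      using bound[of w] abs_le_square_iff[of "h w" \<delta>] by (auto simp: indicator_def power2_eq_square)
  qed
  then show ?thesis
    using assms(1) sets.Int_space_eq2[of S M] by (simp add: L2inner_def)
qed

section \<open>Symmetric bilinear forms and their geodesics\<close>

lemma definite_form_Cauchy_Schwarz:
  fixes B :: "'a::real_vector \<Rightarrow> 'a \<Rightarrow> real"
  assumes bil: "bilinear B" and sym: "\<And>x y. B x y = B y x"
    and pos: "\<And>x. 0 \<le> B x x" and definite: "\<And>x. B x x = 0 \<Longrightarrow> x = 0"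
  shows "(B x y)\<^sup>2 \<le> B x x * B y y"
proof (cases "y = 0")
  case True
  then show ?thesis using bilinear_rzero[OF bil] by simp
next
  case False
  then have Byy: "0 < B y y" using pos[of y] definite[of y] by linarith
  define r where "r = B x y / B y y"
  have "0 \<le> B (x - r *\<^sub>R y) (x - r *\<^sub>R y)" by (rule pos)
  also have "\<dots> = B x x - r * B x y"
    using Byy by (simp add: bilinear_lsub[OF bil] bilinear_rsub[OF bil] bilinear_lmul[OF bil]
        bilinear_rmul[OF bil] sym[of y x] r_def)
  also have "\<dots> = B x x - (B x y)\<^sup>2 / B y y"
    by (simp add: r_def power2_eq_square)
  finally show ?thesis using Byy by (simp add: pos_divide_le_eq)
qed

lemma symmetric_form_segment_expansion:
  assumes bil: "bilinear P" and sym: "\<And>x y. P x y = P y x"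
  shows "P ((1 - t) *\<^sub>R x + t *\<^sub>R y) ((1 - t) *\<^sub>R x + t *\<^sub>R y)
         = (1 - t) * P x x + t * P y y - t * (1 - t) * P (x - y) (x - y)"
proof -
  have segment: "P ((1 - t) *\<^sub>R x + t *\<^sub>R y) ((1 - t) *\<^sub>R x + t *\<^sub>R y)
     = (1 - t) * (1 - t) * P x x + 2 * t * (1 - t) * P x y + t * t * P y y"
    unfolding bilinear_ladd[OF bil] bilinear_radd[OF bil] bilinear_lmul[OF bil] bilinear_rmul[OF bil]
      sym[of y x]
    by (simp add: algebra_simps)
  have difference: "P (x - y) (x - y) = P x x - 2 * P x y + P y y"
    by (simp add: bilinear_lsub[OF bil] bilinear_rsub[OF bil] sym[of y x])
  show ?thesis unfolding segment difference by (simp add: algebra_simps)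
qed

lemma const_speed_geodesic_form_is_segment:
  fixes B :: "'a::real_vector \<Rightarrow> 'a \<Rightarrow> real"
  assumes bil: "bilinear B" and sym: "\<And>x y. B x y = B y x"
    and pos: "\<And>x. 0 \<le> B x x" and definite: "\<And>x. B x x = 0 \<Longrightarrow> x = 0"
    and \<gamma>: "const_speed_geodesic (\<lambda>x y. sqrt (B (y - x) (y - x))) \<gamma>" and t: "t \<in> {0..1}"
  shows "\<gamma> t = (1 - t) *\<^sub>R \<gamma> 0 + t *\<^sub>R \<gamma> 1"
proof -
  define a where "a = \<gamma> t - \<gamma> 0"
  define b where "b = \<gamma> 1 - \<gamma> t"
  define E where "E = B (\<gamma> 1 - \<gamma> 0) (\<gamma> 1 - \<gamma> 0)"
  have geo: "sqrt (B (\<gamma> u - \<gamma> s) (\<gamma> u - \<gamma> s)) = \<bar>u - s\<bar> * sqrt E"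
    if "s \<in> {0..1}" "u \<in> {0..1}" for s u
    using \<gamma> that unfolding const_speed_geodesic_def E_def by blast
  have squared: "B z z = r\<^sup>2 * E" if "sqrt (B z z) = r * sqrt E" for z r
  proof -
    have "B z z = (sqrt (B z z))\<^sup>2" using pos by simp
    also have "\<dots> = r\<^sup>2 * E" using that pos[of "\<gamma> 1 - \<gamma> 0"] by (simp add: power_mult_distrib E_def)
    finally show ?thesis .
  qed
  have Baa: "B a a = t\<^sup>2 * E"
    using geo[of 0 t] t by (intro squared) (simp add: a_def)
  have Bbb: "B b b = (1 - t)\<^sup>2 * E"
    using geo[of t 1] t by (intro squared) (simp add: b_def)
  have "\<gamma> 1 - \<gamma> 0 = a + b" by (simp add: a_def b_def)
  then have "E = B a a + 2 * B a b + B b b"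
    by (simp add: E_def bilinear_ladd[OF bil] bilinear_radd[OF bil] sym[of b a])
  then have Bab: "B a b = t * (1 - t) * E"
    unfolding Baa Bbb by (simp add: power2_eq_square algebra_simps)
  \<comment> \<open>equality in the triangle inequality through \<open>\<gamma> t\<close> forces \<open>(1 - t) a = t b\<close>\<close>
  have "B ((1 - t) *\<^sub>R a - t *\<^sub>R b) ((1 - t) *\<^sub>R a - t *\<^sub>R b)
      = (1 - t)\<^sup>2 * B a a - 2 * t * (1 - t) * B a b + t\<^sup>2 * B b b"
    unfolding bilinear_lsub[OF bil] bilinear_rsub[OF bil] bilinear_lmul[OF bil] bilinear_rmul[OF bil]
      sym[of b a]
    by (simp add: power2_eq_square algebra_simps)
  also have "\<dots> = 0"
    unfolding Baa Bbb Bab by (simp add: power2_eq_square algebra_simps)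
  finally have "(1 - t) *\<^sub>R a - t *\<^sub>R b = 0" by (rule definite)
  then show ?thesis by (simp add: a_def b_def algebra_simps)
qed

lemma geodesically_convex_quadratic:
  fixes B Q :: "'a::real_vector \<Rightarrow> 'a \<Rightarrow> real"
  assumes bil: "bilinear B" and sym: "\<And>x y. B x y = B y x"
    and pos: "\<And>x. 0 \<le> B x x" and definite: "\<And>x. B x x = 0 \<Longrightarrow> x = 0"
    and Q: "bilinear Q" "\<And>x y. Q x y = Q y x"
    and bound: "\<And>h. Q h h + lam * B h h \<le> 0"
  shows "geodesically_convex (\<lambda>x y. sqrt (B (y - x) (y - x))) (\<lambda>x. - (1/2) * Q x x) lam"
  unfolding geodesically_convex_def
proof (intro allI impI)
  fix \<gamma> :: "real \<Rightarrow> 'a" and t :: real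
  assume \<gamma>: "const_speed_geodesic (\<lambda>x y. sqrt (B (y - x) (y - x))) \<gamma>" and t: "t \<in> {0..1}"
  define h where "h = \<gamma> 0 - \<gamma> 1"
  have "B (\<gamma> 1 - \<gamma> 0) (\<gamma> 1 - \<gamma> 0) = B (- h) (- h)" by (simp add: h_def)
  then have dist_sq: "(sqrt (B (\<gamma> 1 - \<gamma> 0) (\<gamma> 1 - \<gamma> 0)))\<^sup>2 = B h h"
    using pos by (simp add: bilinear_lneg[OF bil] bilinear_rneg[OF bil])
  have "Q (\<gamma> t) (\<gamma> t) = (1 - t) * Q (\<gamma> 0) (\<gamma> 0) + t * Q (\<gamma> 1) (\<gamma> 1) - t * (1 - t) * Q h h"
    using const_speed_geodesic_form_is_segment[OF bil sym pos definite \<gamma> t]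
      symmetric_form_segment_expansion[OF Q] unfolding h_def
    by metis
  then have "- (1/2) * Q (\<gamma> t) (\<gamma> t) = (1 - t) * (- (1/2) * Q (\<gamma> 0) (\<gamma> 0))
      + t * (- (1/2) * Q (\<gamma> 1) (\<gamma> 1)) - lam * (t * (1 - t) / 2) * B h h
      + t * (1 - t) * (Q h h + lam * B h h) / 2"
    by (simp add: field_simps)
  moreover have "0 \<le> t * (1 - t)" using t by simp
  then have "t * (1 - t) * (Q h h + lam * B h h) \<le> 0"
    using bound[of h] by (rule mult_nonneg_nonpos)
  ultimately show "- (1/2) * Q (\<gamma> t) (\<gamma> t) \<le> (1 - t) * (- (1/2) * Q (\<gamma> 0) (\<gamma> 0))
      + t * (- (1/2) * Q (\<gamma> 1) (\<gamma> 1))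
      - lam * (t * (1 - t) / 2) * (sqrt (B (\<gamma> 1 - \<gamma> 0) (\<gamma> 1 - \<gamma> 0)))\<^sup>2"
    unfolding dist_sq by linarith
qed

section \<open>Riesz representation\<close>

definition riesz_energy :: "('a::real_normed_vector \<Rightarrow> real) \<Rightarrow> 'a \<Rightarrow> real" where
  "riesz_energy \<phi> x = (norm x)\<^sup>2 / 2 - \<phi> x"

lemma riesz_energy_parallelogram:
  fixes \<phi> :: "'a::real_inner \<Rightarrow> real"
  assumes "linear \<phi>"
  shows "(norm (a - b))\<^sup>2 = 4 * riesz_energy \<phi> a + 4 * riesz_energy \<phi> b
           - 8 * riesz_energy \<phi> ((1/2) *\<^sub>R (a + b))"
  using linear_add[OF assms] linear_scale[OF assms]
  by (simp add: riesz_energy_def power2_norm_eq_inner inner_add inner_diff inner_commute algebra_simps)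

lemma riesz_energy_bounded_below:
  assumes "bounded_linear \<phi>"
  shows "\<exists>c. \<forall>x. c \<le> riesz_energy \<phi> x"
proof -
  obtain K where K: "\<And>x. norm (\<phi> x) \<le> norm x * K"
    using bounded_linear.bounded[OF assms] by blast
  have "- K\<^sup>2 / 2 \<le> riesz_energy \<phi> x" for x
  proof -
    have "0 \<le> (norm x - K)\<^sup>2" by simp
    then show ?thesis using K[of x] by (simp add: riesz_energy_def power2_eq_square algebra_simps)
  qed
  then show ?thesis by blast
qed

lemma riesz_energy_has_minimizer:
  fixes \<phi> :: "'a::{real_inner,complete_space} \<Rightarrow> real"
  assumes bl: "bounded_linear \<phi>"
  shows "\<exists>z. \<forall>x. riesz_energy \<phi> z \<le> riesz_energy \<phi> x"
proof -
  let ?J = "riesz_energy \<phi>"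
  define m where "m = Inf (range ?J)"
  have bdd: "bdd_below (range ?J)"
    using riesz_energy_bounded_below[OF bl] by (auto intro: bdd_belowI2)
  have m_le: "m \<le> ?J x" for x
    unfolding m_def by (rule cInf_lower[OF _ bdd]) auto
  have "\<exists>x. ?J x < m + 1 / (real n + 1)" for n
    using cInf_lessD[of "range ?J" "m + 1 / (real n + 1)"] by (auto simp: m_def)
  then obtain xs where xs: "\<And>n. ?J (xs n) < m + 1 / (real n + 1)" by metis
  have "Cauchy xs"
  proof (rule metric_CauchyI)
    fix e :: real assume "0 < e"
    obtain N :: nat where "8 / e\<^sup>2 < real N"
      using reals_Archimedean2 by blast
    moreover have "0 < e\<^sup>2" using \<open>0 < e\<close> by simp
    ultimately have "8 < real N * e\<^sup>2" by (simp add: pos_divide_less_eq)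
    then have "8 < (real N + 1) * e\<^sup>2" using \<open>0 < e\<^sup>2\<close> unfolding distrib_right by linarith
    then have N': "8 / (real N + 1) < e\<^sup>2" by (simp add: pos_divide_less_eq mult.commute)
    have "dist (xs n) (xs k) < e" if "N \<le> n" "N \<le> k" for n k
    proof -
      have "1 / (real n + 1) \<le> 1 / (real N + 1)" "1 / (real k + 1) \<le> 1 / (real N + 1)"
        using that by (auto simp: frac_le)
      moreover have "(dist (xs n) (xs k))\<^sup>2 \<le> 4 * ?J (xs n) + 4 * ?J (xs k) - 8 * m"
        using riesz_energy_parallelogram[OF bounded_linear.linear[OF bl], of "xs n" "xs k"]
          m_le[of "(1/2) *\<^sub>R (xs n + xs k)"]
        by (simp add: dist_norm)
      ultimately have "(dist (xs n) (xs k))\<^sup>2 < e\<^sup>2"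
        using xs[of n] xs[of k] N' by linarith
      then show ?thesis using \<open>0 < e\<close> by (simp add: power_less_imp_less_base)
    qed
    then show "\<exists>N. \<forall>n\<ge>N. \<forall>k\<ge>N. dist (xs n) (xs k) < e" by blast
  qed
  then obtain z where z: "xs \<longlonglongrightarrow> z"
    using Cauchy_convergent_iff convergent_def by blast
  have "isCont ?J z"
    unfolding riesz_energy_def using linear_continuous_at[OF bl] by (intro continuous_intros) auto
  then have "(\<lambda>n. ?J (xs n)) \<longlonglongrightarrow> ?J z"
    using isCont_tendsto_compose z by blast
  moreover have "(\<lambda>n. ?J (xs n)) \<longlonglongrightarrow> m"
  proof (rule tendsto_sandwich[of "\<lambda>n. m" _ _ "\<lambda>n. m + 1 / (real n + 1)"])
    show "(\<lambda>n. m + 1 / (real n + 1)) \<longlonglongrightarrow> m"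
      using tendsto_add[OF tendsto_const[of m] LIMSEQ_inverse_real_of_nat]
      by (simp add: inverse_eq_divide add.commute)
  qed (use m_le xs in \<open>auto intro: always_eventually less_imp_le\<close>)
  ultimately have "?J z = m" by (rule LIMSEQ_unique)
  then show ?thesis using m_le by auto
qed

lemma linear_coeff_eq_0_if_nonneg:
  fixes a b :: real
  assumes "0 \<le> b" and nonneg: "\<And>t. 0 \<le> t * a + t\<^sup>2 * b"
  shows "a = 0"
proof (rule ccontr)
  assume "a \<noteq> 0"
  define d where "d = b + 1"
  have "0 < d" using \<open>0 \<le> b\<close> by (simp add: d_def)
  have "b = d - 1" by (simp add: d_def)
  have "(- a / d) * a + (- a / d)\<^sup>2 * b = - a\<^sup>2 / d\<^sup>2"
    using \<open>0 < d\<close> unfolding \<open>b = d - 1\<close> by (simp add: field_simps power2_eq_square)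
  also have "\<dots> < 0" using \<open>a \<noteq> 0\<close> \<open>0 < d\<close> by (simp add: divide_neg_pos)
  finally show False using nonneg[of "- a / d"] by simp
qed

theorem riesz_representation:
  fixes \<phi> :: "'a::{real_inner,complete_space} \<Rightarrow> real"
  assumes bl: "bounded_linear \<phi>"
  shows "\<exists>z. \<forall>y. \<phi> y = inner z y"
proof -
  obtain z where z: "\<And>x. riesz_energy \<phi> z \<le> riesz_energy \<phi> x"
    using riesz_energy_has_minimizer[OF bl] by blast
  have "inner z y - \<phi> y = 0" for y
  proof (rule linear_coeff_eq_0_if_nonneg)
    show "0 \<le> (norm y)\<^sup>2 / 2" by simp
    fix t :: real
    have "(norm (z + t *\<^sub>R y))\<^sup>2 = (norm z)\<^sup>2 + 2 * t * inner z y + t\<^sup>2 * (norm y)\<^sup>2"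
      unfolding power2_norm_eq_inner by (simp add: inner_add inner_commute power2_eq_square algebra_simps)
    then show "0 \<le> t * (inner z y - \<phi> y) + t\<^sup>2 * ((norm y)\<^sup>2 / 2)"
      using z[of "z + t *\<^sub>R y"] linear_add[OF bounded_linear.linear[OF bl]]
        linear_scale[OF bounded_linear.linear[OF bl]]
      by (simp add: riesz_energy_def algebra_simps)
  qed
  then have "\<forall>y. \<phi> y = inner z y" by simp
  then show ?thesis by blast
qed

section \<open>The metric induced by \<open>K\<close>\<close>

lemma Sup_dual_form_eq:
  fixes K :: "'a::real_inner \<Rightarrow> 'a"
  assumes le: "\<And>\<xi> u. inner \<xi> (2 *\<^sub>R u - K \<xi>) \<le> B u u"
    and attained: "\<And>u. \<exists>\<xi>. inner \<xi> (2 *\<^sub>R u - K \<xi>) = B u u"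
  shows "Sup (range (\<lambda>\<xi>. inner \<xi> (2 *\<^sub>R u - K \<xi>))) = B u u"
proof (rule cSup_eq_maximum)
  obtain \<xi> where "inner \<xi> (2 *\<^sub>R u - K \<xi>) = B u u" using attained by blast
  from this[symmetric] show "B u u \<in> range (\<lambda>\<xi>. inner \<xi> (2 *\<^sub>R u - K \<xi>))"
    by (rule range_eqI)
next
  fix x assume "x \<in> range (\<lambda>\<xi>. inner \<xi> (2 *\<^sub>R u - K \<xi>))"
  then obtain \<xi> where "x = inner \<xi> (2 *\<^sub>R u - K \<xi>)" by blast
  then show "x \<le> B u u" using le by simp
qed

lemma chord_le_curve_energy:
  fixes K :: "'a::real_inner \<Rightarrow> 'a"
  assumes B: "bounded_bilinear B"
    and le: "\<And>\<xi> u. inner \<xi> (2 *\<^sub>R u - K \<xi>) \<le> B u u"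
    and attained: "\<And>u. \<exists>\<xi>. inner \<xi> (2 *\<^sub>R u - K \<xi>) = B u u"
    and D: "continuous_on {0..1} D"
    and \<gamma>: "\<And>s. s \<in> {0..1} \<Longrightarrow> (\<gamma> has_vector_derivative D s) (at s within {0..1})"
  shows "B (\<gamma> 1 - \<gamma> 0) (\<gamma> 1 - \<gamma> 0) \<le> integral {0..1} (\<lambda>s. B (D s) (D s))"
proof -
  define v where "v = \<gamma> 1 - \<gamma> 0"
  obtain \<xi> where \<xi>: "inner \<xi> (2 *\<^sub>R v - K \<xi>) = B v v" using attained by blast
  define c where "c = inner \<xi> (K \<xi>)"
  \<comment> \<open>\<open>2 (\<xi>, D s) - c\<close> bounds \<open>B (D s) (D s)\<close> from below and integrates to a quantity
    depending only on the endpoints of \<open>\<gamma>\<close>\<close>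
  have "((\<lambda>s. inner \<xi> (D s)) has_integral inner \<xi> (\<gamma> 1) - inner \<xi> (\<gamma> 0)) {0..1}"
    using bounded_linear.has_vector_derivative[OF bounded_linear_inner_right \<gamma>]
    by (intro fundamental_theorem_of_calculus) auto
  from has_integral_diff[OF has_integral_mult_right[OF this, of 2] has_integral_const_real[of c 0 1]]
  have "((\<lambda>s. 2 * inner \<xi> (D s) - c) has_integral B v v) {0..1}"
    using \<xi> by (simp add: c_def v_def inner_diff_right mult.commute)
  moreover have "((\<lambda>s. B (D s) (D s)) has_integral integral {0..1} (\<lambda>s. B (D s) (D s))) {0..1}"
    using bounded_bilinear.continuous_on[OF B D D] by (intro integrable_integral integrable_continuous_interval)
  moreover have "2 * inner \<xi> (D s) - c \<le> B (D s) (D s)" for s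
    using le[of \<xi> "D s"] by (simp add: c_def inner_diff_right)
  ultimately show ?thesis unfolding v_def by (rule has_integral_le)
qed

theorem Kdist_eq_sqrt_form:
  fixes K :: "'a::real_inner \<Rightarrow> 'a"
  assumes B: "bounded_bilinear B"
    and le: "\<And>\<xi> u. inner \<xi> (2 *\<^sub>R u - K \<xi>) \<le> B u u"
    and attained: "\<And>u. \<exists>\<xi>. inner \<xi> (2 *\<^sub>R u - K \<xi>) = B u u"
  shows "Kdist K = (\<lambda>x1 x2. sqrt (B (x2 - x1) (x2 - x1)))"
proof (intro ext)
  fix x1 x2 :: 'a
  define G where "G \<gamma> = integral {0..1}
      (\<lambda>s. Sup (range (\<lambda>\<xi>. inner \<xi> (2 *\<^sub>R vector_derivative \<gamma> (at s within {0..1}) - K \<xi>))))"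
    for \<gamma> :: "real \<Rightarrow> 'a"
  have G: "G \<gamma> = integral {0..1} (\<lambda>s. B (D s) (D s))"
    if "\<And>s. s \<in> {0..1} \<Longrightarrow> (\<gamma> has_vector_derivative D s) (at s within {0..1})" for \<gamma> D
    unfolding G_def
  proof (rule integral_cong)
    fix s :: real assume s: "s \<in> {0..1}"
    have "at s within {0..1} \<noteq> bot"
      using s by (simp add: trivial_limit_within islimpt_Icc)
    then have "vector_derivative \<gamma> (at s within {0..1}) = D s"
      using that[OF s] by (rule vector_derivative_within)
    then show "Sup (range (\<lambda>\<xi>. inner \<xi> (2 *\<^sub>R vector_derivative \<gamma> (at s within {0..1}) - K \<xi>)))
        = B (D s) (D s)"
      using Sup_dual_form_eq[where K = K and B = B, OF le attained] by simp
  qed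
  have "Inf (G ` curves x1 x2) = B (x2 - x1) (x2 - x1)"
  proof (rule cInf_eq_minimum)
    define l where "l s = s *\<^sub>R (x2 - x1) + x1" for s :: real
    have l': "(l has_vector_derivative (x2 - x1)) (at s within {0..1})" for s
    proof -
      have "((\<lambda>s::real. s *\<^sub>R (x2 - x1)) has_vector_derivative (x2 - x1)) (at s within {0..1})"
        unfolding has_vector_derivative_def
        by (rule bounded_linear_imp_has_derivative) (rule bounded_linear_scaleR_left)
      then show ?thesis unfolding l_def has_vector_derivative_add_const .
    qed
    then have "l \<in> curves x1 x2"
      unfolding curves_def by (intro CollectI conjI exI[of _ "\<lambda>s. x2 - x1"]) (simp_all add: l_def)
    moreover have "G l = B (x2 - x1) (x2 - x1)"
      using G[of l "\<lambda>s. x2 - x1"] l' by simp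
    ultimately show "B (x2 - x1) (x2 - x1) \<in> G ` curves x1 x2" by (metis imageI)
  next
    fix y assume "y \<in> G ` curves x1 x2"
    then obtain \<gamma> D where "y = G \<gamma>" "\<gamma> 0 = x1" "\<gamma> 1 = x2" "continuous_on {0..1} D"
      and \<gamma>: "\<And>s. s \<in> {0..1} \<Longrightarrow> (\<gamma> has_vector_derivative D s) (at s within {0..1})"
      unfolding curves_def by blast
    then show "B (x2 - x1) (x2 - x1) \<le> y"
      using chord_le_curve_energy[OF B le attained \<open>continuous_on {0..1} D\<close> \<gamma>] G[OF \<gamma>] by simp
  qed
  then show "Kdist K x1 x2 = sqrt (B (x2 - x1) (x2 - x1))"
    unfolding Kdist_def G_def by simp
qed

section \<open>Essential supremum and approximate eigenvalues\<close>

lemma esssup_ereal_ne_infinity: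
  assumes "f \<in> borel_measurable M" "AE w in M. f w \<le> C"
  shows "esssup M (\<lambda>w. ereal (f w)) \<noteq> \<infinity>"
proof -
  have "esssup M (\<lambda>w. ereal (f w)) \<le> ereal C"
    using assms by (intro esssup_I) (auto elim: eventually_mono)
  then show ?thesis by auto
qed

lemma AE_le_ess_sup:
  assumes "f \<in> borel_measurable M" "AE w in M. f w \<le> C"
  shows "AE w in M. f w \<le> ess_sup M f"
  using esssup_AE[of "\<lambda>w. ereal (f w)" M]
proof eventually_elim
  case (elim w)
  also have "esssup M (\<lambda>w. ereal (f w)) \<le> ereal (ess_sup M f)"
    using esssup_ereal_ne_infinity[OF assms] unfolding ess_sup_def
    by (cases "esssup M (\<lambda>w. ereal (f w))") auto
  finally show ?case by simp
qed

lemma ess_sup_nonpos_iff: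
  assumes "f \<in> borel_measurable M" "AE w in M. f w \<le> C"
  shows "ess_sup M f \<le> 0 \<longleftrightarrow> (AE w in M. f w \<le> 0)"
proof
  assume "ess_sup M f \<le> 0"
  with AE_le_ess_sup[OF assms] show "AE w in M. f w \<le> 0" by (auto elim: eventually_mono)
next
  assume "AE w in M. f w \<le> 0"
  then have "esssup M (\<lambda>w. ereal (f w)) \<le> 0"
    using assms(1) by (intro esssup_I) (auto elim: eventually_mono)
  then show "ess_sup M f \<le> 0"
    unfolding ess_sup_def by (cases "esssup M (\<lambda>w. ereal (f w))") auto
qed

lemma emeasure_near_ess_sup_pos:
  assumes f: "f \<in> borel_measurable M" "AE w in M. f w \<le> C"
    and pos: "0 < ess_sup M f" and "0 < \<epsilon>"
  shows "0 < emeasure M {w \<in> space M. \<bar>f w - ess_sup M f\<bar> < \<epsilon>}"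
proof -
  let ?s = "ess_sup M f"
  have "esssup M (\<lambda>w. ereal (f w)) = ereal ?s"
    using esssup_ereal_ne_infinity[OF f] pos unfolding ess_sup_def
    by (cases "esssup M (\<lambda>w. ereal (f w))") auto
  then have "0 < emeasure M {w \<in> space M. ereal (?s - \<epsilon>) < ereal (f w)}"
    using \<open>0 < \<epsilon>\<close> f(1) by (intro esssup_pos_measure) auto
  also have "\<dots> \<le> emeasure M {w \<in> space M. \<bar>f w - ?s\<bar> < \<epsilon>}"
    using AE_le_ess_sup[OF f] f(1) by (intro emeasure_mono_AE) (auto elim!: eventually_mono)
  finally show ?thesis .
qed

lemma approx_eigenvalue_in_op_spectrum:
  fixes A :: "'a::real_normed_vector \<Rightarrow> 'a"
  assumes approx: "\<And>\<epsilon>. 0 < \<epsilon> \<Longrightarrow> \<exists>x. x \<noteq> 0 \<and> norm (A x - l *\<^sub>R x) \<le> \<epsilon> * norm x"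
  shows "l \<in> op_spectrum A"
proof (rule ccontr)
  assume "l \<notin> op_spectrum A"
  then obtain R where R: "bounded_linear R" "\<And>x. R (A x - l *\<^sub>R x) = x"
    unfolding op_spectrum_def by blast
  obtain K where K: "0 < K" "\<And>y. norm (R y) \<le> norm y * K"
    using bounded_linear.pos_bounded[OF R(1)] by blast
  obtain x where x: "x \<noteq> 0" "norm (A x - l *\<^sub>R x) \<le> 1 / (2 * K) * norm x"
    using approx[of "1 / (2 * K)"] K(1) by auto
  have "norm x \<le> norm (A x - l *\<^sub>R x) * K"
    using K(2)[of "A x - l *\<^sub>R x"] R(2) by simp
  also have "\<dots> \<le> 1 / (2 * K) * norm x * K"
    using K(1) by (intro mult_right_mono[OF x(2)]) simp
  also have "\<dots> = norm x / 2" using K(1) by simp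
  finally show False using x(1) by simp
qed

section \<open>Diagonalised operators\<close>

locale L2_chart =
  fixes M :: "'w measure"
    and V :: "'h::{real_inner,complete_space} \<Rightarrow> 'w \<Rightarrow> real"
    and Vinv :: "('w \<Rightarrow> real) \<Rightarrow> 'h"
  assumes V: "bounded_linear_to_L2 M V"
    and Vinv: "is_bounded_inverse M V Vinv"
begin

lemma V_L2: "V x \<in> L2 M"
  using V by (simp add: bounded_linear_to_L2_def)

lemma V_add: "V (x + y) = (\<lambda>w. V x w + V y w)"
  using V by (simp add: bounded_linear_to_L2_def)

lemma V_scaleR: "V (c *\<^sub>R x) = (\<lambda>w. c * V x w)"
  using V by (simp add: bounded_linear_to_L2_def)

lemma V_zero: "V 0 = (\<lambda>w. 0)"
  using V_scaleR[of 0 0] by simp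

lemma Vinv_V: "Vinv (V x) = x"
  using Vinv unfolding is_bounded_inverse_def by blast

lemma V_Vinv_AE: "g \<in> L2 M \<Longrightarrow> AE w in M. V (Vinv g) w = g w"
  using Vinv unfolding is_bounded_inverse_def by blast

lemma Vinv_cong_AE: "g \<in> L2 M \<Longrightarrow> h \<in> L2 M \<Longrightarrow> AE w in M. g w = h w \<Longrightarrow> Vinv g = Vinv h"
  using Vinv unfolding is_bounded_inverse_def by blast

lemma Vinv_add: "g \<in> L2 M \<Longrightarrow> h \<in> L2 M \<Longrightarrow> Vinv (\<lambda>w. g w + h w) = Vinv g + Vinv h"
  using Vinv unfolding is_bounded_inverse_def by blast

lemma Vinv_scale: "g \<in> L2 M \<Longrightarrow> Vinv (\<lambda>w. c * g w) = c *\<^sub>R Vinv g"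
  using Vinv unfolding is_bounded_inverse_def by blast

lemma Vinv_zero: "Vinv (\<lambda>w. 0) = 0"
  using Vinv_V[of 0] by (simp add: V_zero)

lemma Vinv_diff:
  assumes "g \<in> L2 M" "h \<in> L2 M"
  shows "Vinv (\<lambda>w. g w - h w) = Vinv g - Vinv h"
proof -
  have "Vinv (\<lambda>w. g w + (-1) * h w) = Vinv g + Vinv (\<lambda>w. (-1) * h w)"
    using Vinv_add[OF assms(1) L2_scale[OF assms(2)]] .
  also have "Vinv (\<lambda>w. (-1) * h w) = - Vinv h"
    using Vinv_scale[OF assms(2), of "-1"] by simp
  finally show ?thesis by simp
qed

lemma Vinv_eq_0_if_L2norm_eq_0:
  assumes "g \<in> L2 M" "L2norm M g = 0"
  shows "Vinv g = 0"
proof -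
  have "AE w in M. g w = 0"
    using assms L2inner_nonneg[of M g] by (intro L2inner_self_eq_0_imp_AE) (auto simp: L2norm_def)
  then show ?thesis using Vinv_cong_AE[OF assms(1) L2_zero] Vinv_zero by simp
qed

lemma bdd_above_opnorm_V: "bdd_above (range (\<lambda>x. L2norm M (V x) / norm x))"
proof -
  obtain C where C: "\<And>x. L2norm M (V x) \<le> C * norm x"
    using V unfolding bounded_linear_to_L2_def by blast
  have "L2norm M (V x) / norm x \<le> \<bar>C\<bar>" for x
  proof (cases "x = 0")
    case False
    have "L2norm M (V x) \<le> \<bar>C\<bar> * norm x"
      using C[of x] mult_right_mono[OF abs_ge_self[of C] norm_ge_zero[of x]] by linarith
    then show ?thesis using False by (simp add: divide_le_eq)
  qed simp
  then show ?thesis by (rule bdd_aboveI2)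
qed

lemma bdd_above_opnorm_Vinv: "bdd_above ((\<lambda>g. norm (Vinv g) / L2norm M g) ` L2 M)"
proof -
  obtain C where C: "\<And>g. g \<in> L2 M \<Longrightarrow> norm (Vinv g) \<le> C * L2norm M g"
    using Vinv unfolding is_bounded_inverse_def by blast
  have "norm (Vinv g) / L2norm M g \<le> \<bar>C\<bar>" if "g \<in> L2 M" for g
  proof (cases "L2norm M g = 0")
    case False
    then have "0 < L2norm M g" using L2norm_nonneg[of M g] by simp
    have "norm (Vinv g) \<le> \<bar>C\<bar> * L2norm M g"
      using C[OF that] mult_right_mono[OF abs_ge_self[of C] L2norm_nonneg[of M g]] by linarith
    then show ?thesis using \<open>0 < L2norm M g\<close> by (simp add: divide_le_eq)
  qed simp
  then show ?thesis by (intro bdd_aboveI2) auto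
qed

lemma L2norm_V_le: "L2norm M (V x) \<le> opnorm_V M V * norm x"
proof (cases "x = 0")
  case True
  then show ?thesis by (simp add: V_zero L2norm_def L2inner_def)
next
  case False
  have "L2norm M (V x) / norm x \<le> opnorm_V M V"
    unfolding opnorm_V_def using bdd_above_opnorm_V by (rule cSUP_upper[OF UNIV_I])
  then show ?thesis using False by (simp add: divide_le_eq mult.commute)
qed

lemma norm_Vinv_le:
  assumes "g \<in> L2 M"
  shows "norm (Vinv g) \<le> opnorm_Vinv M Vinv * L2norm M g"
proof (cases "L2norm M g = 0")
  case True
  then show ?thesis using Vinv_eq_0_if_L2norm_eq_0[OF assms] by simp
next
  case False
  then have "0 < L2norm M g" using L2norm_nonneg[of M g] by simp
  have "norm (Vinv g) / L2norm M g \<le> opnorm_Vinv M Vinv"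
    unfolding opnorm_Vinv_def using bdd_above_opnorm_Vinv by (rule cSUP_upper[OF assms])
  then show ?thesis using \<open>0 < L2norm M g\<close> by (simp add: divide_le_eq mult.commute)
qed

lemma opnorm_V_nonneg: "0 \<le> opnorm_V M V"
proof -
  have "L2norm M (V 0) / norm (0::'h) \<le> opnorm_V M V"
    unfolding opnorm_V_def using bdd_above_opnorm_V by (rule cSUP_upper[OF UNIV_I])
  then show ?thesis by simp
qed

lemma opnorm_Vinv_nonneg: "0 \<le> opnorm_Vinv M Vinv"
proof -
  have "norm (Vinv (\<lambda>w. 0)) / L2norm M (\<lambda>w. 0) \<le> opnorm_Vinv M Vinv"
    unfolding opnorm_Vinv_def using bdd_above_opnorm_Vinv by (rule cSUP_upper[OF L2_zero])
  then show ?thesis by (simp add: Vinv_zero)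
qed

definition Vinner :: "'h \<Rightarrow> 'h \<Rightarrow> real" where
  "Vinner x y = L2inner M (V x) (V y)"

lemma Vinner_commute: "Vinner x y = Vinner y x"
  unfolding Vinner_def by (rule L2inner_commute)

lemma Vinner_nonneg: "0 \<le> Vinner x x"
  unfolding Vinner_def by (rule L2inner_nonneg)

lemma Vinner_self_eq_0_imp: "Vinner x x = 0 \<Longrightarrow> x = 0"
proof -
  assume "Vinner x x = 0"
  then have "AE w in M. V x w = 0"
    unfolding Vinner_def using V_L2 by (rule L2inner_self_eq_0_imp_AE[rotated])
  then have "Vinv (V x) = Vinv (\<lambda>w. 0)" using V_L2 by (intro Vinv_cong_AE) auto
  then show "x = 0" by (simp add: Vinv_V Vinv_zero)
qed

lemma Vinner_bilinear: "bilinear Vinner"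
proof -
  have add: "Vinner (x + y) z = Vinner x z + Vinner y z" for x y z
    using L2_mult_integrable[OF V_L2 V_L2, of x z] L2_mult_integrable[OF V_L2 V_L2, of y z]
    by (simp add: Vinner_def L2inner_def V_add distrib_right)
  have scale: "Vinner (c *\<^sub>R x) y = c * Vinner x y" for c x y
    by (simp add: Vinner_def L2inner_def V_scaleR mult.assoc)
  show ?thesis
    unfolding bilinear_def
    by (auto intro!: linearI simp: add scale Vinner_commute[of _ "_ + _"] Vinner_commute[of _ "_ *\<^sub>R _"])
      (simp_all add: Vinner_commute)
qed

lemma Vinner_self: "Vinner x x = (L2norm M (V x))\<^sup>2"
  using Vinner_nonneg[of x] by (simp add: Vinner_def L2norm_def)

lemma abs_Vinner_le: "\<bar>Vinner x y\<bar> \<le> (opnorm_V M V)\<^sup>2 * (norm x * norm y)"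
proof -
  have "\<bar>Vinner x y\<bar>\<^sup>2 \<le> (L2norm M (V x) * L2norm M (V y))\<^sup>2"
    using definite_form_Cauchy_Schwarz[OF Vinner_bilinear Vinner_commute Vinner_nonneg Vinner_self_eq_0_imp]
    by (simp add: Vinner_self power_mult_distrib)
  then have "\<bar>Vinner x y\<bar> \<le> L2norm M (V x) * L2norm M (V y)"
    by (rule power2_le_imp_le) (simp add: L2norm_nonneg)
  also have "\<dots> \<le> (opnorm_V M V * norm x) * (opnorm_V M V * norm y)"
    by (intro mult_mono L2norm_V_le) (simp_all add: L2norm_nonneg opnorm_V_nonneg)
  finally show ?thesis by (simp add: power2_eq_square mult_ac)
qed

lemma Vinner_bounded_bilinear: "bounded_bilinear Vinner"
proof
  fix a a' b b' :: 'h and r :: real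
  show "Vinner (a + a') b = Vinner a b + Vinner a' b" by (rule bilinear_ladd[OF Vinner_bilinear])
  show "Vinner a (b + b') = Vinner a b + Vinner a b'" by (rule bilinear_radd[OF Vinner_bilinear])
  show "Vinner (r *\<^sub>R a) b = r *\<^sub>R Vinner a b" by (rule bilinear_lmul[OF Vinner_bilinear])
  show "Vinner a (r *\<^sub>R b) = r *\<^sub>R Vinner a b" by (rule bilinear_rmul[OF Vinner_bilinear])
next
  show "\<exists>K. \<forall>a b. norm (Vinner a b) \<le> norm a * norm b * K"
    using abs_Vinner_le by (metis real_norm_def mult.commute)
qed

lemma one_le_opnorm_product:
  fixes x :: 'h
  assumes "x \<noteq> 0"
  shows "1 \<le> opnorm_Vinv M Vinv * opnorm_V M V"
proof -
  have "norm x = norm (Vinv (V x))" by (simp add: Vinv_V)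
  also have "\<dots> \<le> opnorm_Vinv M Vinv * L2norm M (V x)" by (rule norm_Vinv_le[OF V_L2])
  also have "\<dots> \<le> opnorm_Vinv M Vinv * (opnorm_V M V * norm x)"
    by (intro mult_left_mono L2norm_V_le opnorm_Vinv_nonneg)
  finally show ?thesis using assms by (simp add: mult.assoc[symmetric])
qed

lemma Vinner_le_scaled_Vinner:
  "e * Vinner h h \<le> e * (if 0 \<le> e then (opnorm_Vinv M Vinv)\<^sup>2 * (opnorm_V M V)\<^sup>2
                          else 1 / ((opnorm_Vinv M Vinv)\<^sup>2 * (opnorm_V M V)\<^sup>2)) * Vinner h h"
proof (cases "h = 0")
  case True
  then show ?thesis using bilinear_lzero[OF Vinner_bilinear] by simp
next
  case False
  define P where "P = (opnorm_Vinv M Vinv * opnorm_V M V)\<^sup>2"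
  have "1 \<le> P" unfolding P_def using one_le_opnorm_product[OF False] by (simp add: one_le_power)
  have "0 \<le> Vinner h h" by (rule Vinner_nonneg)
  show ?thesis
  proof (cases "0 \<le> e")
    case True
    then have "e * Vinner h h * 1 \<le> e * Vinner h h * P"
      using \<open>1 \<le> P\<close> \<open>0 \<le> Vinner h h\<close> by (intro mult_left_mono) auto
    then show ?thesis using True by (simp add: P_def power_mult_distrib mult_ac)
  next
    case False
    have "1 / P \<le> 1" using \<open>1 \<le> P\<close> by simp
    moreover have "e * Vinner h h \<le> 0" using False \<open>0 \<le> Vinner h h\<close> by (simp add: mult_nonpos_nonneg)
    ultimately have "e * Vinner h h * 1 \<le> e * Vinner h h * (1 / P)"
      by (intro mult_left_mono_neg) auto
    then show ?thesis using False by (simp add: P_def power_mult_distrib mult_ac)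
  qed
qed

end

locale L2_chart_adjoint = L2_chart M V Vinv
  for M :: "'w measure"
    and V :: "'h::{real_inner,complete_space} \<Rightarrow> 'w \<Rightarrow> real"
    and Vinv :: "('w \<Rightarrow> real) \<Rightarrow> 'h" +
  fixes W :: "'h \<Rightarrow> 'w \<Rightarrow> real"
  assumes W: "is_adjoint_of_inv M Vinv W"
begin

lemma W_L2: "W \<xi> \<in> L2 M"
  using W by (simp add: is_adjoint_of_inv_def)

lemma L2inner_W: "g \<in> L2 M \<Longrightarrow> L2inner M (W \<xi>) g = inner \<xi> (Vinv g)"
  using W by (simp add: is_adjoint_of_inv_def)

lemma inner_K_eq: "inner \<xi> (2 *\<^sub>R u - Vinv (W \<xi>)) = 2 * L2inner M (W \<xi>) (V u) - L2inner M (W \<xi>) (W \<xi>)"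
  using L2inner_W[OF V_L2, of \<xi> u] L2inner_W[OF W_L2, of \<xi> \<xi>]
  by (simp add: inner_diff_right Vinv_V)

lemma inner_K_le: "inner \<xi> (2 *\<^sub>R u - Vinv (W \<xi>)) \<le> Vinner u u"
  unfolding inner_K_eq Vinner_def using L2inner_two_mult_le[OF W_L2 V_L2] .

lemma inner_K_attained: "\<exists>\<xi>. inner \<xi> (2 *\<^sub>R u - Vinv (W \<xi>)) = Vinner u u"
proof -
  obtain \<xi> where \<xi>: "\<And>y. Vinner u y = inner \<xi> y"
    using riesz_representation[OF bounded_bilinear.bounded_linear_right[OF Vinner_bounded_bilinear]]
    by blast
  have "inner \<xi> (Vinv (W \<xi>)) = Vinner u (Vinv (W \<xi>))" using \<xi> by simp
  also have "\<dots> = L2inner M (V u) (W \<xi>)"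
    unfolding Vinner_def using V_Vinv_AE[OF W_L2, of \<xi>] V_L2 W_L2 by (intro L2inner_cong_AE) auto
  also have "\<dots> = inner \<xi> u" using L2inner_W[OF V_L2, of \<xi> u] by (simp add: L2inner_commute Vinv_V)
  also have "\<dots> = Vinner u u" using \<xi> by simp
  finally have "inner \<xi> (2 *\<^sub>R u - Vinv (W \<xi>)) = Vinner u u"
    using \<xi>[of u] by (simp add: inner_diff_right)
  then show ?thesis by blast
qed

lemma Kdist_eq: "Kdist (\<lambda>\<xi>. Vinv (W \<xi>)) = (\<lambda>x1 x2. sqrt (Vinner (x2 - x1) (x2 - x1)))"
  by (rule Kdist_eq_sqrt_form[OF Vinner_bounded_bilinear inner_K_le inner_K_attained])

end

locale L2_multiplier = L2_chart M V Vinv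
  for M :: "'w measure"
    and V :: "'h::{real_inner,complete_space} \<Rightarrow> 'w \<Rightarrow> real"
    and Vinv :: "('w \<Rightarrow> real) \<Rightarrow> 'h" +
  fixes f :: "'w \<Rightarrow> real"
  assumes f_meas: "f \<in> borel_measurable M"
    and f_bdd: "\<exists>C. AE w in M. \<bar>f w\<bar> \<le> C"
begin

lemma f_bdd_above: "\<exists>C. AE w in M. f w \<le> C"
proof -
  obtain C where "AE w in M. \<bar>f w\<bar> \<le> C" using f_bdd by blast
  then have "AE w in M. f w \<le> C" by eventually_elim simp
  then show ?thesis by blast
qed

lemma mult_op_L2: "g \<in> L2 M \<Longrightarrow> mult_op f g \<in> L2 M"
  using f_bdd f_meas L2_bounded_mult unfolding mult_op_def by blast

definition mult_form :: "'h \<Rightarrow> 'h \<Rightarrow> real" where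
  "mult_form x y = L2inner M (V x) (mult_op f (V y))"

lemma mult_form_commute: "mult_form x y = mult_form y x"
  unfolding mult_form_def L2inner_def mult_op_def by (simp add: algebra_simps)

lemma mult_form_bilinear: "bilinear mult_form"
proof -
  have add: "mult_form (x + y) z = mult_form x z + mult_form y z" for x y z
    using L2_mult_integrable[OF V_L2 mult_op_L2[OF V_L2], of x z]
      L2_mult_integrable[OF V_L2 mult_op_L2[OF V_L2], of y z]
    by (simp add: mult_form_def L2inner_def V_add distrib_right)
  have scale: "mult_form (c *\<^sub>R x) y = c * mult_form x y" for c x y
    by (simp add: mult_form_def L2inner_def V_scaleR mult.assoc)
  show ?thesis
    unfolding bilinear_def
    by (auto intro!: linearI simp: add scale mult_form_commute[of _ "_ + _"] mult_form_commute[of _ "_ *\<^sub>R _"])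
      (simp_all add: mult_form_commute)
qed

lemma mult_form_le_ess_sup: "mult_form h h \<le> ess_sup M f * Vinner h h"
proof -
  obtain C where C: "AE w in M. f w \<le> C" using f_bdd_above by blast
  have "mult_form h h = (LINT w|M. f w * (V h w * V h w))"
    by (simp add: mult_form_def L2inner_def mult_op_def mult_ac)
  also have "\<dots> \<le> (LINT w|M. ess_sup M f * (V h w * V h w))"
  proof (rule integral_mono_AE)
    show "integrable M (\<lambda>w. f w * (V h w * V h w))"
      using L2_mult_integrable[OF V_L2 mult_op_L2[OF V_L2], of h h] by (simp add: mult_op_def mult_ac)
    show "integrable M (\<lambda>w. ess_sup M f * (V h w * V h w))"
      using L2_mult_integrable[OF V_L2 V_L2, of h h] by simp
    show "AE w in M. f w * (V h w * V h w) \<le> ess_sup M f * (V h w * V h w)"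
      using AE_le_ess_sup[OF f_meas C] by eventually_elim (simp add: mult_right_mono)
  qed
  also have "\<dots> = ess_sup M f * Vinner h h" by (simp add: Vinner_def L2inner_def)
  finally show ?thesis .
qed

lemma diagonal_shift_Vinv:
  assumes A_diag: "\<forall>x. A x = Vinv (mult_op f (V x))" and g: "g \<in> L2 M"
  shows "A (Vinv g) - s *\<^sub>R Vinv g = Vinv (\<lambda>w. (f w - s) * g w)"
proof -
  have "A (Vinv g) = Vinv (mult_op f g)"
    using A_diag mult_op_L2[OF V_L2] mult_op_L2[OF g] V_Vinv_AE[OF g]
    by (auto intro!: Vinv_cong_AE elim!: eventually_mono simp: mult_op_def)
  moreover have "s *\<^sub>R Vinv g = Vinv (\<lambda>w. s * g w)" using Vinv_scale[OF g] by simp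
  moreover have "(\<lambda>w. (f w - s) * g w) = (\<lambda>w. mult_op f g w - s * g w)"
    by (auto simp: mult_op_def algebra_simps)
  ultimately show ?thesis
    using Vinv_diff[OF mult_op_L2[OF g] L2_scale[OF g]] by simp
qed

lemma approximate_eigenvector:
  assumes A_diag: "\<forall>x. A x = Vinv (mult_op f (V x))"
    and S: "S \<in> sets M" "0 < emeasure M S" "emeasure M S < \<infinity>"
    and near: "\<And>w. w \<in> S \<Longrightarrow> \<bar>f w - s\<bar> \<le> \<delta>"
  shows "\<exists>x. x \<noteq> 0 \<and> norm (A x - s *\<^sub>R x) \<le> opnorm_Vinv M Vinv * opnorm_V M V * \<delta> * norm x"
proof -
  let ?g = "indicator S :: 'w \<Rightarrow> real"
  let ?r = "\<lambda>w. (f w - s) * ?g w"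
  define x where "x = Vinv ?g"
  have g: "?g \<in> L2 M" "L2inner M ?g ?g = measure M S" using L2_indicator[OF S(1,3)] by auto
  have "0 < measure M S"
    using S(2,3) by (simp add: measure_def enn2real_positive_iff)
  have "S \<noteq> {}" using S(2) by auto
  then have "0 \<le> \<delta>" using near by force
  have "L2inner M (V x) (V x) = L2inner M ?g ?g"
    unfolding x_def using V_Vinv_AE[OF g(1)] V_L2 g(1) by (intro L2inner_cong_AE) auto
  then have Vx: "L2norm M (V x) = sqrt (measure M S)" by (simp add: L2norm_def g(2))
  then have "x \<noteq> 0" using \<open>0 < measure M S\<close> by (auto simp: V_zero L2norm_def L2inner_def)
  have r: "?r \<in> L2 M"
  proof -
    have "?r = (\<lambda>w. mult_op f ?g w - s * ?g w)" by (auto simp: mult_op_def algebra_simps)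
    then show ?thesis using L2_diff[OF mult_op_L2[OF g(1)] L2_scale[OF g(1)]] by simp
  qed
  have "L2norm M ?r \<le> \<delta> * sqrt (measure M S)"
    using L2inner_indicator_mult_le[OF S(1,3) r near] \<open>0 \<le> \<delta>\<close> real_sqrt_le_mono
    by (fastforce simp: L2norm_def real_sqrt_mult)
  have "norm (A x - s *\<^sub>R x) = norm (Vinv ?r)"
    unfolding x_def diagonal_shift_Vinv[OF A_diag g(1)] ..
  also have "\<dots> \<le> opnorm_Vinv M Vinv * L2norm M ?r" by (rule norm_Vinv_le[OF r])
  also have "\<dots> \<le> opnorm_Vinv M Vinv * (\<delta> * L2norm M (V x))"
    using \<open>L2norm M ?r \<le> \<delta> * sqrt (measure M S)\<close> Vx by (intro mult_left_mono opnorm_Vinv_nonneg) auto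
  also have "\<dots> \<le> opnorm_Vinv M Vinv * (\<delta> * (opnorm_V M V * norm x))"
    using \<open>0 \<le> \<delta>\<close> by (intro mult_left_mono L2norm_V_le opnorm_Vinv_nonneg) auto
  finally show ?thesis using \<open>x \<noteq> 0\<close> by (auto simp: mult_ac)
qed

lemma ess_sup_in_op_spectrum:
  assumes fin: "finite_measure M" and A_diag: "\<forall>x. A x = Vinv (mult_op f (V x))"
    and pos: "0 < ess_sup M f"
  shows "ess_sup M f \<in> op_spectrum A"
proof (rule approx_eigenvalue_in_op_spectrum)
  fix \<epsilon> :: real assume "0 < \<epsilon>"
  define P where "P = opnorm_Vinv M Vinv * opnorm_V M V"
  have "0 \<le> P" unfolding P_def by (simp add: opnorm_Vinv_nonneg opnorm_V_nonneg)
  define \<delta> where "\<delta> = \<epsilon> / (P + 1)"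
  have "0 < \<delta>" using \<open>0 < \<epsilon>\<close> \<open>0 \<le> P\<close> by (simp add: \<delta>_def)
  have "P * \<delta> \<le> \<epsilon>" using \<open>0 < \<epsilon>\<close> \<open>0 \<le> P\<close> by (simp add: \<delta>_def field_simps)
  define S where "S = {w \<in> space M. \<bar>f w - ess_sup M f\<bar> < \<delta>}"
  obtain C where C: "AE w in M. f w \<le> C" using f_bdd_above by blast
  have "S \<in> sets M" unfolding S_def using f_meas by measurable
  moreover have "0 < emeasure M S"
    unfolding S_def by (rule emeasure_near_ess_sup_pos[OF f_meas C pos \<open>0 < \<delta>\<close>])
  moreover have "emeasure M S < \<infinity>"
    using finite_measure.emeasure_finite[OF fin] by (simp add: top.not_eq_extremum)
  ultimately obtain x where "x \<noteq> 0" "norm (A x - ess_sup M f *\<^sub>R x) \<le> P * \<delta> * norm x"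
    using approximate_eigenvector[OF A_diag, of S "ess_sup M f" \<delta>] by (auto simp: S_def P_def)
  moreover have "P * \<delta> * norm x \<le> \<epsilon> * norm x"
    using \<open>P * \<delta> \<le> \<epsilon>\<close> by (rule mult_right_mono) simp
  ultimately show "\<exists>x. x \<noteq> 0 \<and> norm (A x - ess_sup M f *\<^sub>R x) \<le> \<epsilon> * norm x"
    by (blast intro: order_trans)
qed

lemma AE_nonpos_if_op_spectrum_nonpos:
  assumes "finite_measure M" "\<forall>x. A x = Vinv (mult_op f (V x))" "op_spectrum A \<subseteq> {..0}"
  shows "AE w in M. f w \<le> 0"
proof -
  obtain C where C: "AE w in M. f w \<le> C" using f_bdd_above by blast
  have "\<not> 0 < ess_sup M f"
    using ess_sup_in_op_spectrum[OF assms(1,2)] assms(3) by fastforce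
  then show ?thesis using ess_sup_nonpos_iff[OF f_meas C] by simp
qed

end

theorem theorem2:
  fixes M :: "'w measure"
    and f :: "'w \<Rightarrow> real"
    and V :: "'h::{real_inner, complete_space} \<Rightarrow> 'w \<Rightarrow> real"
    and Vinv :: "('w \<Rightarrow> real) \<Rightarrow> 'h"
    and W :: "'h \<Rightarrow> 'w \<Rightarrow> real"
    and A :: "'h \<Rightarrow> 'h"
  assumes sep: "separable_space (euclidean :: 'h topology)"
    and f_meas: "f \<in> borel_measurable M"
    and f_bdd: "\<exists>C. AE w in M. \<bar>f w\<bar> \<le> C"
    and V: "bounded_linear_to_L2 M V"
    and Vinv: "is_bounded_inverse M V Vinv"
    and W: "is_adjoint_of_inv M Vinv W"
    and A_bl: "bounded_linear A"
    and A_surj: "surj A"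
    and A_diag: "\<forall>x. A x = Vinv (mult_op f (V x))"
  shows "let F = (\<lambda>x. - (1/2) * L2inner M (V x) (mult_op f (V x)));
             K = (\<lambda>\<xi>. Vinv (W \<xi>));
             d = Kdist K;
             cV = (if ess_sup M f \<ge> 0 then (opnorm_Vinv M Vinv)^2 * (opnorm_V M V)^2
                   else 1 / ((opnorm_Vinv M Vinv)^2 * (opnorm_V M V)^2));
             lam = - ess_sup M f * cV
         in geodesically_convex d F lam \<and>
            ((finite_measure M \<and> op_spectrum A \<subseteq> {..0}) \<longrightarrow>
               (AE w in M. f w \<le> 0) \<and> lam \<ge> 0)"
proof -
  interpret L2_chart_adjoint M V Vinv W
    using V Vinv W by unfold_locales
  interpret L2_multiplier M V Vinv f
    using f_meas f_bdd by unfold_locales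
  define cV where "cV = (if ess_sup M f \<ge> 0 then (opnorm_Vinv M Vinv)^2 * (opnorm_V M V)^2
                   else 1 / ((opnorm_Vinv M Vinv)^2 * (opnorm_V M V)^2))"
  have "mult_form h h + (- ess_sup M f * cV) * Vinner h h \<le> 0" for h
    using mult_form_le_ess_sup[of h] Vinner_le_scaled_Vinner[of "ess_sup M f" h] by (simp add: cV_def)
  from geodesically_convex_quadratic[OF Vinner_bilinear Vinner_commute Vinner_nonneg Vinner_self_eq_0_imp
      mult_form_bilinear mult_form_commute this]
  have "geodesically_convex (Kdist (\<lambda>\<xi>. Vinv (W \<xi>)))
      (\<lambda>x. - (1/2) * L2inner M (V x) (mult_op f (V x))) (- ess_sup M f * cV)"
    unfolding Kdist_eq mult_form_def .
  moreover have "(AE w in M. f w \<le> 0) \<and> 0 \<le> - ess_sup M f * cV"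
    if "finite_measure M \<and> op_spectrum A \<subseteq> {..0}"
  proof
    show "AE w in M. f w \<le> 0"
      using AE_nonpos_if_op_spectrum_nonpos that A_diag by blast
    then have "ess_sup M f \<le> 0"
      using ess_sup_nonpos_iff[OF f_meas] f_bdd_above by blast
    moreover have "0 \<le> cV" by (simp add: cV_def)
    ultimately show "0 \<le> - ess_sup M f * cV" by (simp add: mult_nonpos_nonneg)
  qed
  ultimately show ?thesis unfolding Let_def cV_def by blast
qed

end
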